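(* Let $K$ be a non-archimedean local field and let $\{g_n\}$ be a sequence in $\mathrm{SL}_2(K)$ such that each cyclic group $\langle g_n\rangle$ is discrete. If $g_n$ converges to an elliptic element $g\in\mathrm{SL}_2(K)$, then the sequence $\{\mathrm{tr}(g_n)\}$ is eventually constant.
   Context: $\mathrm{SL}_2(K)$ has the subspace topology from $K^4$ and acts by isometries on its Bruhat–Tits tree $T_K$; an element is elliptic if it fixes a vertex of $T_K$. *)

theory Defs
  imports Complex_Main
begin

text \<open>Non-archimedean local field: a field K with an absolute value absv which is
  ultrametric, discretely valued and nontrivial, complete, with finite residue field.\<close>

definition nonarch_local_field :: "('a::field \<Rightarrow> real) \<Rightarrow> bool" where
  "nonarch_local_field absv \<longleftrightarrow>
     (\<forall>x. 0 \<le> absv x) \<and> (\<forall>x. absv x = 0 \<longleftrightarrow> x = 0) \<and>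
     (\<forall>x y. absv (x * y) = absv x * absv y) \<and>
     (\<forall>x y. absv (x + y) \<le> max (absv x) (absv y)) \<and>
     (\<exists>\<pi>. 0 < absv \<pi> \<and> absv \<pi> < 1 \<and>
          (\<forall>x. x \<noteq> 0 \<longrightarrow> (\<exists>k::int. absv x = absv \<pi> powi k))) \<and>
     (\<forall>s::nat \<Rightarrow> 'a. (\<forall>e>0. \<exists>N. \<forall>m\<ge>N. \<forall>n\<ge>N. absv (s m - s n) < e) \<longrightarrow>
          (\<exists>l. \<forall>e>0. \<exists>N. \<forall>n\<ge>N. absv (s n - l) < e)) \<and>
     finite ((\<lambda>x. {y. absv y \<le> 1 \<and> absv (y - x) < 1}) ` {x. absv x \<le> 1})"

text \<open>2x2 matrices (a,b,c,d) = [[a,b],[c,d]], viewed as points of K^4.\<close>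
type_synonym 'a mat2 = "'a \<times> 'a \<times> 'a \<times> 'a"

fun mmul :: "'a::field mat2 \<Rightarrow> 'a mat2 \<Rightarrow> 'a mat2" where
  "mmul (a,b,c,d) (a',b',c',d') = (a*a'+b*c', a*b'+b*d', c*a'+d*c', c*b'+d*d')"

definition mone :: "'a::field mat2" where "mone = (1,0,0,1)"

fun mdet :: "'a::field mat2 \<Rightarrow> 'a" where "mdet (a,b,c,d) = a*d - b*c"

fun mtr :: "'a::field mat2 \<Rightarrow> 'a" where "mtr (a,b,c,d) = a + d"

text \<open>Inverse of a determinant-one matrix.\<close>
fun minv :: "'a::field mat2 \<Rightarrow> 'a mat2" where "minv (a,b,c,d) = (d,-b,-c,a)"

definition SL2 :: "'a::field mat2 set" where "SL2 = {g. mdet g = 1}"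

primrec mpow_nat :: "'a::field mat2 \<Rightarrow> nat \<Rightarrow> 'a mat2" where
  "mpow_nat g 0 = mone"
| "mpow_nat g (Suc n) = mmul g (mpow_nat g n)"

definition mpow :: "'a::field mat2 \<Rightarrow> int \<Rightarrow> 'a mat2" where
  "mpow g k = (if 0 \<le> k then mpow_nat g (nat k) else mpow_nat (minv g) (nat (- k)))"

definition cyclic_group :: "'a::field mat2 \<Rightarrow> 'a mat2 set" where
  "cyclic_group g = range (mpow g)"

text \<open>Max-norm distance on K^4 (induces the product topology).\<close>
fun mdist :: "('a::field \<Rightarrow> real) \<Rightarrow> 'a mat2 \<Rightarrow> 'a mat2 \<Rightarrow> real" where
  "mdist absv (a,b,c,d) (a',b',c',d') =
     max (max (absv (a-a')) (absv (b-b'))) (max (absv (c-c')) (absv (d-d')))"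

definition discrete_set :: "('a::field \<Rightarrow> real) \<Rightarrow> 'a mat2 set \<Rightarrow> bool" where
  "discrete_set absv S \<longleftrightarrow> (\<forall>h\<in>S. \<exists>e>0. \<forall>h'\<in>S. mdist absv h h' < e \<longrightarrow> h' = h)"

definition mat_converges :: "('a::field \<Rightarrow> real) \<Rightarrow> (nat \<Rightarrow> 'a mat2) \<Rightarrow> 'a mat2 \<Rightarrow> bool" where
  "mat_converges absv s g \<longleftrightarrow> (\<forall>e>0. \<exists>N. \<forall>n\<ge>N. mdist absv (s n) g < e)"

text \<open>Bruhat--Tits tree: vertices are homothety classes of O-lattices in K^2,
  where O = {x. absv x \<le> 1}. A lattice is the O-span of a K-basis of K^2.\<close>
definition is_lattice :: "('a::field \<Rightarrow> real) \<Rightarrow> ('a \<times> 'a) set \<Rightarrow> bool" where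
  "is_lattice absv L \<longleftrightarrow> (\<exists>p q r s. p * s - q * r \<noteq> 0 \<and>
      L = {(x * p + y * r, x * q + y * s) | x y. absv x \<le> 1 \<and> absv y \<le> 1})"

fun mapply :: "'a::field mat2 \<Rightarrow> 'a \<times> 'a \<Rightarrow> 'a \<times> 'a" where
  "mapply (a,b,c,d) (x,y) = (a*x + b*y, c*x + d*y)"

text \<open>g is elliptic iff it fixes a vertex [L] of the tree: gL is homothetic to L.\<close>
definition elliptic :: "('a::field \<Rightarrow> real) \<Rightarrow> 'a mat2 \<Rightarrow> bool" where
  "elliptic absv g \<longleftrightarrow> (\<exists>L. is_lattice absv L \<and>
      (\<exists>c. c \<noteq> 0 \<and> mapply g ` L = (\<lambda>(x,y). (c*x, c*y)) ` L))"

end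

theory Submission
  imports Defs "HOL-Computational_Algebra.Polynomial" "HOL-Computational_Algebra.Primes"
begin

text \<open>
  An elliptic element has integral trace, so eventually \<open>|tr g\<^sub>n| \<le> 1\<close>. By Cayley--Hamilton
  the powers of such a \<open>g\<^sub>n\<close> are bounded, and since \<open>\<langle>g\<^sub>n\<rangle>\<close> is discrete, \<open>g\<^sub>n\<close> has finite order.
  The trace of \<open>h\<^sup>k\<close> is a fixed polynomial \<open>P\<^sub>k\<close> in \<open>tr h\<close>, and compactness of the integers
  gives a uniform \<open>M\<close> such that every integral \<open>s\<close> has some \<open>k \<le> M\<close> with \<open>|P\<^sub>k(s) - 2| < \<delta>\<^sup>2\<close>,
  where \<open>\<delta>\<close> bounds \<open>|l|\<close> from below for the primes \<open>l\<close> invertible in \<open>K\<close>. A torsion element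
  with trace that close to 2 has trace exactly 2: an element \<open>\<noteq> \<plusminus>1\<close> of prime order \<open>l\<close> has
  \<open>|l| \<le> |tr - 2|\<close>, and in characteristic \<open>p\<close> the \<open>p\<close>-part is handled by
  \<open>tr (u\<^sup>p) - 2 = (tr u - 2)\<^sup>p\<close>. Hence eventually \<open>tr g\<^sub>n\<close> is a root of one of the finitely
  many nonzero polynomials \<open>P\<^sub>k - 2\<close>, \<open>k \<le> M\<close>; converging to \<open>tr g\<close> in this finite set, it is
  eventually constant.
\<close>

section \<open>Matrices and their powers\<close>

lemma mmul_assoc: "mmul (mmul x y) z = mmul x (mmul y (z::'a::field mat2))"
  by (cases x; cases y; cases z) (simp add: algebra_simps)

lemma mmul_mone_left [simp]: "mmul mone x = (x::'a::field mat2)"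
  by (cases x) (simp add: mone_def)

lemma mmul_mone_right [simp]: "mmul x mone = (x::'a::field mat2)"
  by (cases x) (simp add: mone_def)

lemma mdet_mmul: "mdet (mmul x y) = mdet x * mdet (y::'a::field mat2)"
  by (cases x; cases y) (simp add: algebra_simps)

lemma mmul_minv_left: "mdet h = 1 \<Longrightarrow> mmul (minv h) h = (mone::'a::field mat2)"
  by (cases h) (auto simp: mone_def algebra_simps)

lemma mdet_mone [simp]: "mdet (mone::'a::field mat2) = 1"
  by (simp add: mone_def)

lemma mdet_minv: "mdet (minv h) = mdet (h::'a::field mat2)"
  by (cases h) (auto simp: algebra_simps)

lemma mtr_minv: "mtr (minv h) = mtr (h::'a::field mat2)"
  by (cases h) (auto simp: algebra_simps)

lemma mpow_nat_add: "mpow_nat v (i + j) = mmul (mpow_nat v i) (mpow_nat (v::'a::field mat2) j)"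
  by (induction i) (auto simp: mmul_assoc)

lemma mpow_nat_Suc_right: "mpow_nat v (Suc i) = mmul (mpow_nat v i) (v::'a::field mat2)"
  using mpow_nat_add[of v i 1] by simp

lemma mpow_nat_mult: "mpow_nat (mpow_nat v i) j = mpow_nat (v::'a::field mat2) (i * j)"
  by (induction j) (auto simp: mpow_nat_add mult.commute)

lemma mpow_nat_mone [simp]: "mpow_nat (mone::'a::field mat2) k = mone"
  by (induction k) auto

lemma mdet_mpow_nat: "mdet v = 1 \<Longrightarrow> mdet (mpow_nat (v::'a::field mat2) n) = 1"
  by (induction n) (auto simp: mdet_mmul)

lemma mpow_nat_minv_cancel:
  assumes "mdet h = 1"
  shows "mmul (mpow_nat (minv h) i) (mpow_nat h i) = (mone::'a::field mat2)"
proof (induction i)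
  case (Suc i)
  have "mmul (mpow_nat (minv h) (Suc i)) (mpow_nat h (Suc i))
      = mmul (mpow_nat (minv h) i) (mmul (mmul (minv h) h) (mpow_nat h i))"
    unfolding mpow_nat_Suc_right[of "minv h"] mpow_nat.simps(2)[of h] mmul_assoc ..
  also have "\<dots> = mone" using Suc assms by (simp add: mmul_minv_left)
  finally show ?case .
qed simp

lemma mpow_nat_in_cyclic_group: "mpow_nat h k \<in> cyclic_group h"
  unfolding cyclic_group_def by (rule range_eqI[of _ _ "int k"]) (simp add: mpow_def)

lemma mtr_in_basis:
  fixes h :: "'a::field mat2"
  assumes "p * s - q * r \<noteq> 0"
    and e1: "mapply h (p, q) = (\<mu> * (x1 * p + y1 * r), \<mu> * (x1 * q + y1 * s))"
    and e2: "mapply h (r, s) = (\<mu> * (x2 * p + y2 * r), \<mu> * (x2 * q + y2 * s))"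
  shows "mtr h = \<mu> * (x1 + y2)"
proof -
  obtain a b c d where h: "h = (a, b, c, d)" by (cases h)
  have f: "a * p + b * q = \<mu> * (x1 * p + y1 * r)" "c * p + d * q = \<mu> * (x1 * q + y1 * s)"
    "a * r + b * s = \<mu> * (x2 * p + y2 * r)" "c * r + d * s = \<mu> * (x2 * q + y2 * s)"
    using e1 e2 by (auto simp: h)
  have "(a + d) * (p * s - q * r)
      = s * (a * p + b * q) - r * (c * p + d * q) - q * (a * r + b * s) + p * (c * r + d * s)"
    by (simp add: algebra_simps)
  also have "\<dots> = \<mu> * (x1 + y2) * (p * s - q * r)"
    unfolding f by (simp add: algebra_simps)
  finally show ?thesis using assms(1) by (simp add: h)
qed

lemma mapply_minv: "mdet g = 1 \<Longrightarrow> mapply (minv g) (mapply g w) = (w::'a::field \<times> 'a)"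
proof -
  assume det: "mdet g = 1"
  obtain a b c d where g: "g = (a, b, c, d)" by (cases g)
  obtain u v where w: "w = (u, v)" by (cases w)
  have e: "a * d = 1 + b * c" using det by (simp add: g algebra_simps)
  have "a * (d * u) = u + b * (c * u)" "a * (d * v) = v + b * (c * v)"
    using arg_cong[OF e, of "\<lambda>t. t * u"] arg_cong[OF e, of "\<lambda>t. t * v"]
    by (simp_all add: algebra_simps)
  then show ?thesis by (simp add: g w algebra_simps)
qed

lemma mapply_scale:
  "mapply g (c * x, c * y) = (c * fst (mapply g (x, y)), c * snd (mapply g (x, y)))"
  by (cases g) (auto simp: algebra_simps)

section \<open>Traces of powers\<close>

text \<open>By Cayley--Hamilton, \<open>v\<^sup>2 = s v - 1\<close> for \<open>det v = 1\<close> and \<open>s = tr v\<close>; hence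
  \<open>v\<^sup>n = \<alpha>\<^sub>n v + \<beta>\<^sub>n\<close> with \<open>(\<alpha>\<^sub>n, \<beta>\<^sub>n) = pow_coeffs s n\<close>, and \<open>tr (v\<^sup>n) = pow_trace s n\<close>.\<close>

primrec pow_coeffs :: "'a::comm_ring_1 \<Rightarrow> nat \<Rightarrow> 'a \<times> 'a" where
  "pow_coeffs s 0 = (0, 1)"
| "pow_coeffs s (Suc n) = (fst (pow_coeffs s n) * s + snd (pow_coeffs s n), - fst (pow_coeffs s n))"

definition pow_trace :: "'a::comm_ring_1 \<Rightarrow> nat \<Rightarrow> 'a" where
  "pow_trace s n = fst (pow_coeffs s n) * s + 2 * snd (pow_coeffs s n)"

fun mlin :: "'a::field \<Rightarrow> 'a \<Rightarrow> 'a mat2 \<Rightarrow> 'a mat2" where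
  "mlin \<alpha> \<beta> (a, b, c, d) = (\<alpha> * a + \<beta>, \<alpha> * b, \<alpha> * c, \<alpha> * d + \<beta>)"

lemma mmul_mlin:
  assumes "mdet v = 1"
  shows "mmul v (mlin \<alpha> \<beta> v) = mlin (\<alpha> * mtr v + \<beta>) (- \<alpha>) (v::'a::field mat2)"
proof -
  obtain a b c d where v: "v = (a, b, c, d)" by (cases v)
  have "\<alpha> * (a * d) = \<alpha> + \<alpha> * (b * c)"
    using assms by (simp add: v algebra_simps)
  then show ?thesis by (simp add: v algebra_simps)
qed

lemma mpow_nat_eq_mlin:
  assumes "mdet v = 1"
  shows "mpow_nat v n =
    mlin (fst (pow_coeffs (mtr v) n)) (snd (pow_coeffs (mtr v) n)) (v::'a::field mat2)"
proof (induction n)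
  case 0
  then show ?case by (cases v) (simp add: mone_def)
qed (simp add: mmul_mlin assms)

lemma mtr_mlin: "mtr (mlin \<alpha> \<beta> v) = \<alpha> * mtr v + 2 * (\<beta>::'a::field)"
  by (cases v) (simp add: algebra_simps)

lemma mtr_mpow_nat: "mdet v = 1 \<Longrightarrow> mtr (mpow_nat v n) = pow_trace (mtr v) n"
  by (simp add: mpow_nat_eq_mlin mtr_mlin pow_trace_def)

lemma pow_trace_0: "pow_trace s 0 = 2"
  and pow_trace_1: "pow_trace s (Suc 0) = s"
  and pow_trace_Suc_Suc: "pow_trace s (Suc (Suc n)) = s * pow_trace s (Suc n) - pow_trace s n"
  by (simp_all add: pow_trace_def algebra_simps)

lemma mlin_eq_mone_imp_scalar:
  assumes "mlin \<alpha> \<beta> w = mone" "mdet w = 1" "\<alpha> \<noteq> (0::'a::field)"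
  shows "w = mone \<or> w = (-1, 0, 0, -1)"
proof -
  obtain a b c d where w: "w = (a, b, c, d)" by (cases w)
  from assms(1,3) have "b = 0" "c = 0" "\<alpha> * a + \<beta> = 1" "\<alpha> * d + \<beta> = 1"
    by (auto simp: w mone_def)
  then have "a = d" using assms(3) by (metis add_right_cancel mult_left_cancel)
  with assms(2) \<open>b = 0\<close> have "a * a = 1" by (simp add: w)
  then have "a = 1 \<or> a = -1" by (metis square_eq_1_iff power2_eq_square)
  then show ?thesis using \<open>a = d\<close> \<open>b = 0\<close> \<open>c = 0\<close> by (auto simp: w mone_def)
qed

lemma poly_pow_coeffs:
  "poly (fst (pow_coeffs [:0, 1:] n)) s = fst (pow_coeffs s n) \<and>
   poly (snd (pow_coeffs [:0, 1:] n)) s = snd (pow_coeffs s n)"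
  by (induction n) auto

lemma poly_pow_trace: "poly (pow_trace [:0, 1:] n) s = pow_trace s n"
  using poly_pow_coeffs[of n s] by (simp add: pow_trace_def)

lemma coeff_pow_coeffs_X_ge:
  fixes X :: "'a::comm_ring_1 poly"
  defines "X \<equiv> [:0, 1:]"
  shows "(\<forall>i\<ge>n. coeff (fst (pow_coeffs X n)) i = 0) \<and>
         (\<forall>i\<ge>n. 0 < i \<longrightarrow> coeff (snd (pow_coeffs X n)) i = 0)"
proof (induction n)
  case 0
  then show ?case by (simp add: coeff_1)
next
  case (Suc n)
  have "coeff (fst (pow_coeffs X n) * X) i = 0" if "i \<ge> Suc n" for i
    using Suc that by (cases i) (auto simp: X_def)
  then show ?case using Suc by (auto simp: X_def)
qed

lemma coeff_fst_pow_coeffs_X: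
  "coeff (fst (pow_coeffs [:0, 1:] (Suc n))) n = (1::'a::comm_ring_1)"
proof (induction n)
  case (Suc m)
  have "coeff (snd (pow_coeffs [:0, 1:] (Suc m))) (Suc m) = (0::'a)"
    using coeff_pow_coeffs_X_ge[of "Suc m"] by auto
  then show ?case using Suc by simp
qed simp

lemma pow_trace_X_minus_2_nonzero:
  assumes "k \<ge> 1"
  shows "pow_trace [:0, 1:] k - 2 \<noteq> (0::'a::comm_ring_1 poly)"
proof -
  obtain m where k: "k = Suc m" using assms by (cases k) auto
  have "coeff (fst (pow_coeffs [:0, 1:] k) * [:0, 1:]) k = (1::'a)"
    using coeff_fst_pow_coeffs_X[of m] by (simp add: k)
  moreover have "coeff (snd (pow_coeffs [:0, 1:] k)) k = (0::'a)"
    using coeff_pow_coeffs_X_ge[of k] assms by auto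
  then have "coeff (2 * snd (pow_coeffs [:0, 1:] k)) k = (0::'a)"
    unfolding numeral_poly[where 'a='a] by simp
  moreover have "coeff (2::'a poly) k = 0"
    unfolding numeral_poly[where 'a='a] k by simp
  ultimately have "coeff (pow_trace [:0, 1:] k - 2 :: 'a poly) k = 1"
    by (simp add: pow_trace_def)
  then show ?thesis by auto
qed

definition pow_trace_roots :: "nat \<Rightarrow> 'a::comm_ring_1 set" where
  "pow_trace_roots M = {s. \<exists>k. 1 \<le> k \<and> k \<le> M \<and> pow_trace s k = 2}"

lemma finite_pow_trace_roots: "finite (pow_trace_roots M :: 'a::idom set)"
proof (rule finite_subset)
  show "pow_trace_roots M \<subseteq> (\<Union>k\<in>{1..M}. {s::'a. poly (pow_trace [:0, 1:] k - 2) s = 0})"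
    by (auto simp: pow_trace_roots_def poly_pow_trace)
  show "finite (\<Union>k\<in>{1..M}. {s::'a. poly (pow_trace [:0, 1:] k - 2) s = 0})"
    by (intro finite_UN_I finite_atLeastAtMost poly_roots_finite pow_trace_X_minus_2_nonzero) auto
qed

text \<open>Modulo the characteristic polynomial \<open>X\<^sup>2 - s X + 1\<close>, whose roots \<open>X\<close> and \<open>s - X\<close> are
  the eigenvalues, \<open>pow_trace s n\<close> is the power sum \<open>X\<^sup>n + (s - X)\<^sup>n\<close>.\<close>

lemma pow_trace_poly_mod:
  fixes s :: "'a::comm_ring_1"
  defines "X \<equiv> [:0, 1:] :: 'a poly"
  defines "q \<equiv> X * X - [:s:] * X + 1"
  shows "q dvd [:pow_trace s n:] - (X ^ n + ([:s:] - X) ^ n) \<and>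
         q dvd [:pow_trace s (Suc n):] - (X ^ Suc n + ([:s:] - X) ^ Suc n)"
proof (induction n)
  case 0
  then show ?case by (simp add: pow_trace_0 pow_trace_1 one_pCons numeral_2_eq_2)
next
  case (Suc n)
  let ?R = "\<lambda>n. X ^ n + ([:s:] - X) ^ n"
  have pow_rec: "Z ^ Suc (Suc n) = c * Z ^ Suc n - Z ^ n + Z ^ n * (Z * Z - c * Z + 1)"
    for Z c :: "'a poly" by (simp add: algebra_simps)
  have q_sym: "q = ([:s:] - X) * ([:s:] - X) - [:s:] * ([:s:] - X) + 1"
    by (simp add: q_def algebra_simps)
  have "[:pow_trace s (Suc (Suc n)):] - ?R (Suc (Suc n))
     = [:s:] * ([:pow_trace s (Suc n):] - ?R (Suc n)) - ([:pow_trace s n:] - ?R n) - ?R n * q"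
    unfolding pow_rec[of X "[:s:]"] pow_rec[of "[:s:] - X" "[:s:]"]
      q_def[symmetric] q_sym[symmetric]
    by (simp add: pow_trace_Suc_Suc algebra_simps)
  moreover have "q dvd [:s:] * ([:pow_trace s (Suc n):] - ?R (Suc n))
      - ([:pow_trace s n:] - ?R n) - ?R n * q"
    using Suc.IH by (metis dvd_diff dvd_mult dvd_triv_right)
  ultimately show ?case using Suc.IH by simp
qed

lemma pow_trace_CHAR:
  fixes s :: "'a::field"
  assumes p: "CHAR('a) = p" "prime p"
  shows "pow_trace s p = s ^ p"
proof (rule ccontr)
  assume ne: "pow_trace s p \<noteq> s ^ p"
  define X where "X = ([:0, 1:] :: 'a poly)"
  define q where "q = X * X - [:s:] * X + 1"
  have cp: "CHAR('a poly) = p" "prime CHAR('a poly)" using p by auto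
  have "([:s:] + - X) ^ p = [:s:] ^ p + (- X) ^ p"
    using freshmans_dream[OF cp(2) cp(1)[symmetric]] .
  also have "(- X) ^ p = - (X ^ p)" using minus_power_prime_CHAR[of p X] cp by simp
  finally have "X ^ p + ([:s:] - X) ^ p = [:s ^ p:]" by (simp add: poly_const_pow)
  then have "q dvd [:pow_trace s p - s ^ p:]"
    using pow_trace_poly_mod[of s p] by (simp add: X_def q_def)
  moreover have "degree q = 2"
    by (simp add: q_def X_def one_pCons algebra_simps)
  ultimately show False
    using dvd_imp_degree_le[of q "[:pow_trace s p - s ^ p:]"] ne by simp
qed

lemma mtr_mpow_nat_CHAR:
  fixes u :: "'a::field mat2"
  assumes p: "CHAR('a) = p" "prime p" and "mdet u = 1"
  shows "mtr (mpow_nat u p) - 2 = (mtr u - 2) ^ p"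
proof -
  have cp: "prime CHAR('a)" using p by simp
  have "(mtr u + - 2) ^ p = mtr u ^ p + (- 2) ^ p"
    using freshmans_dream[OF cp p(1)[symmetric]] .
  moreover have "(- (2::'a)) ^ p = - (2 ^ p)"
    using minus_power_prime_CHAR[OF p(1)[symmetric] p(2)] .
  moreover have "(2::'a) ^ p = 2"
    using freshmans_dream[OF cp p(1)[symmetric], of "1::'a" 1] by simp
  ultimately show ?thesis
    using mtr_mpow_nat[OF assms(3)] pow_trace_CHAR[OF p] by simp
qed

lemma mtr_mpow_nat_CHAR_power:
  fixes v :: "'a::field mat2"
  assumes p: "CHAR('a) = p" "prime p" and d: "mdet v = 1"
  shows "mtr (mpow_nat v (p ^ j)) - 2 = (mtr v - 2) ^ (p ^ j)"
proof (induction j)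
  case (Suc j)
  have "mtr (mpow_nat v (p ^ Suc j)) - 2 = mtr (mpow_nat (mpow_nat v (p ^ j)) p) - 2"
    by (simp add: mpow_nat_mult mult.commute)
  also have "\<dots> = (mtr v - 2) ^ (p ^ Suc j)"
    using mtr_mpow_nat_CHAR[OF p mdet_mpow_nat[OF d]] Suc
    by (simp add: power_mult[symmetric] mult.commute)
  finally show ?case .
qed simp

lemma pigeonhole_le_card:
  assumes "finite B" "\<And>k. k \<le> card B \<Longrightarrow> f k \<in> B"
  shows "\<exists>i j. i < j \<and> j \<le> card B \<and> f i = f j"
proof -
  have "\<not> inj_on f {0..card B}"
  proof
    assume "inj_on f {0..card B}"
    moreover have "f ` {0..card B} \<subseteq> B" using assms(2) by auto
    ultimately have "card {0..card B} \<le> card B" using card_inj_on_le assms(1) by blast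
    then show False by simp
  qed
  then obtain i j where "i \<le> card B" "j \<le> card B" "i \<noteq> j" "f i = f j"
    unfolding inj_on_def by auto
  then show ?thesis by (metis linorder_neqE_nat)
qed

section \<open>Non-archimedean absolute values\<close>

locale local_field_absv =
  fixes absv :: "'a::field \<Rightarrow> real"
  assumes nonarch_local_field: "nonarch_local_field absv"
begin

lemma absv_nonneg [simp]: "0 \<le> absv x"
  and absv_eq_0_iff [simp]: "absv x = 0 \<longleftrightarrow> x = 0"
  and absv_mult [simp]: "absv (x * y) = absv x * absv y"
  and absv_ultra: "absv (x + y) \<le> max (absv x) (absv y)"
  using nonarch_local_field by (simp_all add: nonarch_local_field_def)

lemma absv_0 [simp]: "absv 0 = 0"
  by simp

lemma absv_pos_iff: "0 < absv x \<longleftrightarrow> x \<noteq> 0"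
  using absv_nonneg[of x] absv_eq_0_iff[of x] by linarith

lemma absv_1 [simp]: "absv 1 = 1"
proof -
  have "absv 1 = absv 1 * absv 1" using absv_mult[of 1 1] by simp
  moreover have "absv 1 \<noteq> 0" by simp
  ultimately show ?thesis by (metis mult_cancel_left1)
qed

lemma absv_minus [simp]: "absv (- x) = absv x"
proof -
  have "absv (-1) * absv (-1) = 1" using absv_mult[of "-1" "-1"] by simp
  then have "absv (-1) = 1"
    using power2_eq_1_iff[of "absv (-1)"] absv_nonneg[of "-1"] by (auto simp: power2_eq_square)
  then show ?thesis using absv_mult[of "-1" x] by simp
qed

lemma absv_minus_commute: "absv (x - y) = absv (y - x)"
  using absv_minus[of "x - y"] by simp

lemma absv_power [simp]: "absv (x ^ n) = absv x ^ n"
  by (induction n) auto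

lemma absv_inverse [simp]: "absv (inverse x) = inverse (absv x)"
proof (cases "x = 0")
  case False
  then have "absv x * absv (inverse x) = 1" using absv_mult[of x "inverse x"] by simp
  moreover have "absv x \<noteq> 0" using False by simp
  ultimately show ?thesis by (simp add: inverse_eq_divide eq_divide_eq mult.commute)
qed simp

lemma absv_divide [simp]: "absv (x / y) = absv x / absv y"
  by (simp add: divide_inverse)

lemma absv_add_le: "absv x \<le> e \<Longrightarrow> absv y \<le> e \<Longrightarrow> absv (x + y) \<le> e"
  and absv_add_less: "absv x < e \<Longrightarrow> absv y < e \<Longrightarrow> absv (x + y) < e"
  using absv_ultra[of x y] by auto

lemma absv_diff_less: "absv x < e \<Longrightarrow> absv y < e \<Longrightarrow> absv (x - y) < e"
  using absv_ultra[of x "- y"] by auto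

lemma absv_triangle: "absv (x - z) \<le> max (absv (x - y)) (absv (y - z))"
  using absv_ultra[of "x - y" "y - z"] by simp

lemma absv_of_nat_le_1: "absv (of_nat n) \<le> 1"
  by (induction n) (auto intro!: absv_add_le simp: add.commute)

lemma absv_of_int_le_1: "absv (of_int k) \<le> 1"
  by (cases k rule: int_cases) (auto simp: absv_of_nat_le_1 simp del: of_nat_Suc)

lemma absv_mult_le_left: "absv a \<le> 1 \<Longrightarrow> absv (a * x) \<le> absv x"
  by (simp add: mult_left_le_one_le)

lemma absv_2_mult_le: "absv (2 * x) \<le> absv x"
  using absv_of_nat_le_1[of 2] by (intro absv_mult_le_left) simp

lemma exists_uniformizer:
  "\<exists>\<pi>. 0 < absv \<pi> \<and> absv \<pi> < 1 \<and> (\<forall>w. absv w < 1 \<longrightarrow> absv w \<le> absv \<pi>)"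
proof -
  obtain p where p: "0 < absv p" "absv p < 1" "\<And>x. x \<noteq> 0 \<Longrightarrow> \<exists>k::int. absv x = absv p powi k"
    using nonarch_local_field unfolding nonarch_local_field_def by blast
  have "absv w \<le> absv p" if w: "absv w < 1" for w
  proof (cases "w = 0")
    case False
    then obtain k where k: "absv w = absv p powi k" using p by blast
    show ?thesis
    proof (cases "k \<ge> 1")
      case True
      then have "absv p ^ nat k \<le> absv p ^ 1" using p by (intro power_decreasing) auto
      then show ?thesis using k True by (simp add: power_int_def)
    next
      case False
      have "absv p ^ nat (- k) \<le> 1" using p by (intro power_le_one) auto
      then have "1 \<le> absv p powi k" using p False by (simp add: power_int_def field_simps)
      then show ?thesis using k w by simp
    qed
  qed (use p in simp)
  then show ?thesis using p by blast
qed

definition uniformizer :: 'a where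
  "uniformizer = (SOME \<pi>. 0 < absv \<pi> \<and> absv \<pi> < 1 \<and> (\<forall>w. absv w < 1 \<longrightarrow> absv w \<le> absv \<pi>))"

lemma uniformizer: "0 < absv uniformizer" "absv uniformizer < 1"
  "\<And>w. absv w < 1 \<Longrightarrow> absv w \<le> absv uniformizer"
  using someI_ex[OF exists_uniformizer] unfolding uniformizer_def[symmetric] by auto

lemma uniformizer_nonzero: "uniformizer \<noteq> 0"
  using uniformizer(1) by auto

lemma finite_residue_net: "\<exists>X. finite X \<and> (\<forall>z. absv z \<le> 1 \<longrightarrow> (\<exists>x\<in>X. absv (z - x) < 1))"
proof -
  define C where "C = (\<lambda>x. {y. absv y \<le> 1 \<and> absv (y - x) < 1})"
  have fin: "finite (C ` {x. absv x \<le> 1})"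
    using nonarch_local_field unfolding nonarch_local_field_def C_def by blast
  define rep where "rep = (\<lambda>c. SOME x. absv x \<le> 1 \<and> C x = c)"
  have "\<exists>x\<in>rep ` C ` {x. absv x \<le> 1}. absv (z - x) < 1" if z: "absv z \<le> 1" for z
  proof -
    have "absv (rep (C z)) \<le> 1" "C (rep (C z)) = C z"
      using someI_ex[of "\<lambda>x. absv x \<le> 1 \<and> C x = C z"] z unfolding rep_def by auto
    moreover have "z \<in> C z" using z by (simp add: C_def)
    ultimately show ?thesis using z by (auto simp: C_def)
  qed
  then show ?thesis using fin by blast
qed

lemma finite_unit_ball_net_power:
  "\<exists>F. finite F \<and> (\<forall>y. absv y \<le> 1 \<longrightarrow> (\<exists>f\<in>F. absv (y - f) \<le> absv uniformizer ^ r))"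
proof (induction r)
  case 0
  then show ?case by (intro exI[of _ "{0}"]) auto
next
  case (Suc r)
  let ?\<pi> = uniformizer
  obtain F where F: "finite F" "\<And>y. absv y \<le> 1 \<Longrightarrow> \<exists>f\<in>F. absv (y - f) \<le> absv ?\<pi> ^ r"
    using Suc.IH by blast
  obtain X where X: "finite X" "\<And>z. absv z \<le> 1 \<Longrightarrow> \<exists>x\<in>X. absv (z - x) < 1"
    using finite_residue_net by blast
  define F' where "F' = (\<lambda>(f, x). f + ?\<pi> ^ r * x) ` (F \<times> X)"
  have pos: "absv ?\<pi> ^ r > 0" using uniformizer by simp
  have "\<exists>f'\<in>F'. absv (y - f') \<le> absv ?\<pi> ^ Suc r" if y: "absv y \<le> 1" for y
  proof -
    obtain f where f: "f \<in> F" "absv (y - f) \<le> absv ?\<pi> ^ r" using F(2) y by blast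
    define w where "w = (y - f) / ?\<pi> ^ r"
    have "absv w \<le> 1" using f pos by (simp add: w_def)
    then obtain x where x: "x \<in> X" "absv (w - x) < 1" using X by blast
    have "y - (f + ?\<pi> ^ r * x) = ?\<pi> ^ r * (w - x)"
      using uniformizer_nonzero by (simp add: w_def field_simps)
    then have "absv (y - (f + ?\<pi> ^ r * x)) = absv ?\<pi> ^ r * absv (w - x)" by simp
    also have "\<dots> \<le> absv ?\<pi> ^ r * absv ?\<pi>"
      using uniformizer(3)[OF x(2)] pos by simp
    finally have "absv (y - (f + ?\<pi> ^ r * x)) \<le> absv ?\<pi> ^ Suc r" by (simp add: mult.commute)
    moreover have "f + ?\<pi> ^ r * x \<in> F'" using f x by (auto simp: F'_def)
    ultimately show ?thesis by blast
  qed
  then show ?case using F X by (intro exI[of _ F']) (auto simp: F'_def)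
qed

lemma finite_ball_net:
  assumes "e > 0"
  shows "\<exists>F. finite F \<and> (\<forall>y. absv y \<le> R \<longrightarrow> (\<exists>f\<in>F. absv (y - f) < e))"
proof -
  let ?\<pi> = uniformizer
  have "0 < 1 / max R 1" by simp
  then obtain j where j: "absv ?\<pi> ^ j < 1 / max R 1"
    using real_arch_pow_inv[of "1 / max R 1" "absv ?\<pi>"] uniformizer by blast
  obtain t where t: "absv ?\<pi> ^ t < e"
    using real_arch_pow_inv[of e "absv ?\<pi>"] uniformizer assms by auto
  obtain F where F: "finite F" "\<And>y. absv y \<le> 1 \<Longrightarrow> \<exists>f\<in>F. absv (y - f) \<le> absv ?\<pi> ^ (j + t)"
    using finite_unit_ball_net_power by blast
  have pos: "absv ?\<pi> ^ j > 0" using uniformizer by simp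
  have "\<exists>f\<in>(\<lambda>f. f / ?\<pi> ^ j) ` F. absv (y - f) < e" if y: "absv y \<le> R" for y
  proof -
    have "absv (?\<pi> ^ j * y) \<le> absv ?\<pi> ^ j * max R 1"
      using y pos by (simp add: mult_left_mono)
    also have "\<dots> \<le> 1" using j by (simp add: field_simps)
    finally obtain f where f: "f \<in> F" "absv (?\<pi> ^ j * y - f) \<le> absv ?\<pi> ^ (j + t)"
      using F by blast
    have "y - f / ?\<pi> ^ j = (?\<pi> ^ j * y - f) / ?\<pi> ^ j"
      using uniformizer_nonzero by (simp add: field_simps)
    then have "absv (y - f / ?\<pi> ^ j) = absv (?\<pi> ^ j * y - f) / absv ?\<pi> ^ j" by simp
    also have "\<dots> \<le> absv ?\<pi> ^ (j + t) / absv ?\<pi> ^ j"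
      using f pos by (intro divide_right_mono) auto
    also have "\<dots> = absv ?\<pi> ^ t"
      using pos uniformizer_nonzero by (simp add: power_add)
    finally show ?thesis using t f by force
  qed
  then show ?thesis using F by blast
qed

lemma ball_quantization:
  assumes "e > 0"
  shows "\<exists>q :: 'a \<Rightarrow> 'a. finite (q ` {y. absv y \<le> R}) \<and>
    (\<forall>x y. absv x \<le> R \<longrightarrow> absv y \<le> R \<longrightarrow> q x = q y \<longrightarrow> absv (x - y) < e)"
proof -
  obtain F where F: "finite F" "\<And>y. absv y \<le> R \<Longrightarrow> \<exists>f\<in>F. absv (y - f) < e"
    using finite_ball_net[OF assms] by blast
  define q where "q y = (SOME f. f \<in> F \<and> absv (y - f) < e)" for y
  have q: "q y \<in> F" "absv (y - q y) < e" if "absv y \<le> R" for y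
    using someI_ex[OF F(2)[OF that, unfolded Bex_def]] unfolding q_def by auto
  have "finite (q ` {y. absv y \<le> R})" using q(1) F(1) by (auto intro: finite_subset)
  moreover have "absv (x - y) < e" if "absv x \<le> R" "absv y \<le> R" "q x = q y" for x y
  proof -
    have "x - y = (x - q x) - (y - q y)" using that(3) by simp
    then show ?thesis using q(2)[OF that(1)] q(2)[OF that(2)] by (metis absv_diff_less)
  qed
  ultimately show ?thesis by blast
qed

section \<open>Bounded discrete cyclic groups are finite\<close>


fun mnorm :: "'a mat2 \<Rightarrow> real" where
  "mnorm (a, b, c, d) = max (max (absv a) (absv b)) (max (absv c) (absv d))"

lemma mnorm_minv: "mnorm (minv h) = mnorm h"
  by (cases h) (auto simp: max.commute max.left_commute)

lemma mdist_nonneg: "0 \<le> mdist absv x y"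
  by (cases x; cases y) (simp add: le_max_iff_disj)

lemma mdist_mmul_le: "mdist absv (mmul M X) (mmul M Y) \<le> mnorm M * mdist absv X Y"
proof -
  obtain a b c d where M: "M = (a, b, c, d)" by (cases M)
  obtain x1 x2 x3 x4 where X: "X = (x1, x2, x3, x4)" by (cases X)
  obtain y1 y2 y3 y4 where Y: "Y = (y1, y2, y3, y4)" by (cases Y)
  define D where "D = mdist absv X Y"
  define B where "B = mnorm M"
  have D: "absv (x1 - y1) \<le> D" "absv (x2 - y2) \<le> D" "absv (x3 - y3) \<le> D" "absv (x4 - y4) \<le> D"
    by (auto simp: D_def X Y)
  have B: "absv a \<le> B" "absv b \<le> B" "absv c \<le> B" "absv d \<le> B"
    by (auto simp: B_def M)
  have row: "absv ((u * x + v * y) - (u * x' + v * y')) \<le> B * D"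
    if "absv u \<le> B" "absv v \<le> B" "absv (x - x') \<le> D" "absv (y - y') \<le> D" for u v x y x' y'
  proof -
    have "(u * x + v * y) - (u * x' + v * y') = u * (x - x') + v * (y - y')"
      by (simp add: algebra_simps)
    moreover have "absv (u * (x - x')) \<le> B * D" "absv (v * (y - y')) \<le> B * D"
      using that by (simp_all add: mult_mono')
    ultimately show ?thesis by (auto intro: absv_add_le)
  qed
  show ?thesis unfolding D_def[symmetric] B_def[symmetric]
    using row[OF B(1,2) D(1,3)] row[OF B(1,2) D(2,4)] row[OF B(3,4) D(1,3)] row[OF B(3,4) D(2,4)]
    by (simp add: M X Y)
qed

lemma pow_coeffs_integral:
  "absv s \<le> 1 \<Longrightarrow> absv (fst (pow_coeffs s n)) \<le> 1 \<and> absv (snd (pow_coeffs s n)) \<le> 1"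
proof (induction n)
  case (Suc n)
  then have "absv (fst (pow_coeffs s n) * s) \<le> 1" by (simp add: mult_le_one)
  then show ?case using Suc by (auto intro: absv_add_le)
qed simp

lemma mnorm_mlin_le:
  assumes "absv \<alpha> \<le> 1" "absv \<beta> \<le> 1"
  shows "mnorm (mlin \<alpha> \<beta> v) \<le> max (mnorm v) 1"
proof -
  obtain a b c d where v: "v = (a, b, c, d)" by (cases v)
  have m: "absv (\<alpha> * x) \<le> absv x" for x using assms(1) by (rule absv_mult_le_left)
  have "absv (\<alpha> * a + \<beta>) \<le> max (mnorm v) 1" "absv (\<alpha> * d + \<beta>) \<le> max (mnorm v) 1"
    using m[of a] m[of d] assms(2) by (auto intro!: absv_add_le simp: v intro: order_trans)
  moreover have "absv (\<alpha> * b) \<le> max (mnorm v) 1" "absv (\<alpha> * c) \<le> max (mnorm v) 1"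
    using m[of b] m[of c] by (auto simp: v intro: order_trans)
  ultimately show ?thesis by (simp add: v)
qed

lemma mnorm_mpow_nat_le:
  "mdet v = 1 \<Longrightarrow> absv (mtr v) \<le> 1 \<Longrightarrow> mnorm (mpow_nat v n) \<le> max (mnorm v) 1"
  using pow_coeffs_integral[of "mtr v" n] by (simp add: mpow_nat_eq_mlin mnorm_mlin_le)

lemma bounded_mat_seq_close_pair:
  fixes u :: "nat \<Rightarrow> 'a mat2"
  assumes "e > 0" "\<And>k. mnorm (u k) \<le> R"
  shows "\<exists>i j. i < j \<and> mdist absv (u i) (u j) < e"
proof -
  obtain q :: "'a \<Rightarrow> 'a" where q: "finite (q ` {y. absv y \<le> R})"
    "\<forall>x y. absv x \<le> R \<longrightarrow> absv y \<le> R \<longrightarrow> q x = q y \<longrightarrow> absv (x - y) < e"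
    using ball_quantization[OF assms(1), of R] by blast
  define Q where "Q = q ` {y. absv y \<le> R}"
  define code where "code k = (case u k of (a, b, c, d) \<Rightarrow> (q a, q b, q c, q d))" for k
  have fin: "finite (Q \<times> Q \<times> Q \<times> Q)" using q(1) by (simp add: Q_def)
  have inQ: "q x \<in> Q" if "absv x \<le> R" for x
    unfolding Q_def using that by (intro imageI) simp
  have code: "code k \<in> Q \<times> Q \<times> Q \<times> Q" for k
  proof -
    obtain a b c d where u: "u k = (a, b, c, d)" by (cases "u k")
    then have "absv a \<le> R" "absv b \<le> R" "absv c \<le> R" "absv d \<le> R"
      using assms(2)[of k] by auto
    then show ?thesis unfolding code_def u using inQ by auto
  qed
  obtain i j where ij: "i < j" "code i = code j"
    using pigeonhole_le_card[OF fin, of code] code by blast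
  obtain a b c d where i: "u i = (a, b, c, d)" by (cases "u i")
  obtain a' b' c' d' where j: "u j = (a', b', c', d')" by (cases "u j")
  have eq: "q a = q a'" "q b = q b'" "q c = q c'" "q d = q d'"
    using ij(2) by (simp_all add: code_def i j)
  have bi: "absv a \<le> R" "absv b \<le> R" "absv c \<le> R" "absv d \<le> R"
    using assms(2)[of i] by (auto simp: i)
  have bj: "absv a' \<le> R" "absv b' \<le> R" "absv c' \<le> R" "absv d' \<le> R"
    using assms(2)[of j] by (auto simp: j)
  have "mdist absv (u i) (u j) < e"
    using q(2)[rule_format, OF bi(1) bj(1) eq(1)] q(2)[rule_format, OF bi(2) bj(2) eq(2)]
      q(2)[rule_format, OF bi(3) bj(3) eq(3)] q(2)[rule_format, OF bi(4) bj(4) eq(4)]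
    by (simp add: i j)
  then show ?thesis using ij(1) by blast
qed

text \<open>Powers of an element with integral trace are bounded (Cayley--Hamilton), so two of them are
  close; multiplying by a bounded negative power makes a nontrivial power close to the identity.\<close>

lemma discrete_cyclic_group_torsion:
  assumes d: "mdet h = 1" and tr: "absv (mtr h) \<le> 1"
    and disc: "discrete_set absv (cyclic_group h)"
  shows "\<exists>m\<ge>1. mpow_nat h m = mone"
proof -
  define R where "R = max (mnorm h) 1"
  have R: "R > 0" by (simp add: R_def)
  obtain e where e: "e > 0" "\<And>h'. h' \<in> cyclic_group h \<Longrightarrow> mdist absv mone h' < e \<Longrightarrow> h' = mone"
    using disc mpow_nat_in_cyclic_group[of h 0] unfolding discrete_set_def by fastforce
  have bnd: "mnorm (mpow_nat h k) \<le> R" for k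
    using mnorm_mpow_nat_le[OF d tr] by (simp add: R_def)
  obtain i j where ij: "i < j" "mdist absv (mpow_nat h i) (mpow_nat h j) < e / R"
    using bounded_mat_seq_close_pair[of "e / R" "mpow_nat h" R] bnd e R by auto
  define M where "M = mpow_nat (minv h) i"
  have M_i: "mmul M (mpow_nat h i) = mone"
    using mpow_nat_minv_cancel[OF d] by (simp add: M_def)
  have M_j: "mmul M (mpow_nat h j) = mpow_nat h (j - i)"
    using mpow_nat_add[of h i "j - i"] ij(1) by (simp add: mmul_assoc[symmetric] M_i)
  have "mnorm M \<le> R"
    using mnorm_mpow_nat_le[of "minv h" i] d tr by (simp add: M_def mdet_minv mtr_minv mnorm_minv R_def)
  have "mdist absv mone (mpow_nat h (j - i)) \<le> mnorm M * mdist absv (mpow_nat h i) (mpow_nat h j)"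
    using mdist_mmul_le[of M "mpow_nat h i" "mpow_nat h j"] by (simp add: M_i M_j)
  also have "\<dots> \<le> R * mdist absv (mpow_nat h i) (mpow_nat h j)"
    using \<open>mnorm M \<le> R\<close> by (intro mult_right_mono) (auto simp: mdist_nonneg)
  also have "\<dots> < e" using ij(2) R by (simp add: field_simps)
  finally have "mpow_nat h (j - i) = mone" using e(2) mpow_nat_in_cyclic_group by blast
  then show ?thesis using ij(1) by (intro exI[of _ "j - i"]) auto
qed

section \<open>Torsion elements with trace close to 2\<close>


lemma absv_le_1_of_near_2: "absv (s - 2) < 1 \<Longrightarrow> absv s \<le> 1"
  using absv_add_le[of "s - 2" 1 2] absv_of_nat_le_1[of 2] by simp

lemma pow_coeffs_near_2:
  assumes near: "absv (s - 2) < 1"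
  shows "absv (fst (pow_coeffs s n) - of_nat n) \<le> absv (s - 2) \<and>
    absv (snd (pow_coeffs s n) - (1 - of_nat n)) \<le> absv (s - 2)"
proof (induction n)
  case (Suc n)
  define a where "a = fst (pow_coeffs s n)"
  define b where "b = snd (pow_coeffs s n)"
  have IH: "absv (a - of_nat n) \<le> absv (s - 2)" "absv (b - (1 - of_nat n)) \<le> absv (s - 2)"
    using Suc by (auto simp: a_def b_def)
  have "absv a \<le> 1"
    using pow_coeffs_integral[OF absv_le_1_of_near_2[OF near]] by (simp add: a_def)
  then have t3: "absv ((s - 2) * a) \<le> absv (s - 2)"
    by (simp add: mult_left_le_one_le mult.commute)
  have t1: "absv (2 * (a - of_nat n)) \<le> absv (s - 2)"
    using IH(1) absv_2_mult_le[of "a - of_nat n"] by linarith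
  have e: "a * s + b - of_nat (Suc n) = 2 * (a - of_nat n) + (b - (1 - of_nat n)) + (s - 2) * a"
    by (simp add: algebra_simps)
  have "absv (a * s + b - of_nat (Suc n)) \<le> absv (s - 2)"
    unfolding e using t1 IH(2) t3 by (intro absv_add_le)
  moreover have "- a - (1 - of_nat (Suc n)) = - (a - of_nat n)" by simp
  ultimately show ?case using IH(1) absv_minus_commute[of a "of_nat n"] by (simp add: a_def b_def)
qed simp

lemma mtr_mpow_nat_near_2:
  assumes d: "mdet v = 1" and near: "absv (mtr v - 2) < 1"
  shows "absv (mtr (mpow_nat v n) - 2) \<le> absv (mtr v - 2)"
proof -
  define s where "s = mtr v"
  define a where "a = fst (pow_coeffs s n)"
  define b where "b = snd (pow_coeffs s n)"
  have c: "absv (a - of_nat n) \<le> absv (s - 2)" "absv (b - (1 - of_nat n)) \<le> absv (s - 2)"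
    using pow_coeffs_near_2[of s n] near by (auto simp: a_def b_def s_def)
  have "absv s \<le> 1" using absv_le_1_of_near_2 near by (simp add: s_def)
  then have t1: "absv (s * (a - of_nat n)) \<le> absv (s - 2)"
    using c(1) absv_mult_le_left order_trans by blast
  have t2: "absv (2 * (b - (1 - of_nat n))) \<le> absv (s - 2)"
    using c(2) absv_2_mult_le[of "b - (1 - of_nat n)"] by linarith
  have t3: "absv ((s - 2) * of_nat n) \<le> absv (s - 2)"
    using absv_of_nat_le_1[of n] by (simp add: mult_left_le_one_le mult.commute)
  have e: "pow_trace s n - 2 = s * (a - of_nat n) + 2 * (b - (1 - of_nat n)) + (s - 2) * of_nat n"
    by (simp add: pow_trace_def a_def b_def algebra_simps)
  have "absv (pow_trace s n - 2) \<le> absv (s - 2)"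
    unfolding e using t1 t2 t3 by (intro absv_add_le)
  then show ?thesis using mtr_mpow_nat[OF d] by (simp add: s_def)
qed

text \<open>For \<open>w \<noteq> \<plusminus>1\<close> of order dividing \<open>l\<close>, \<open>w\<^sup>l = 1\<close> forces \<open>\<alpha>\<^sub>l = 0\<close>, while
  \<open>\<alpha>\<^sub>l \<equiv> l\<close> modulo \<open>tr w - 2\<close>.\<close>

lemma absv_order_le_trace_dist:
  assumes "mdet w = 1" "mpow_nat w l = mone" "w \<noteq> mone" "w \<noteq> (-1, 0, 0, -1)"
    and near: "absv (mtr w - 2) < 1"
  shows "absv (of_nat l) \<le> absv (mtr w - 2)"
proof -
  have "mlin (fst (pow_coeffs (mtr w) l)) (snd (pow_coeffs (mtr w) l)) w = mone"
    using mpow_nat_eq_mlin[OF assms(1), of l] assms(2) by simp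
  then have "fst (pow_coeffs (mtr w) l) = 0"
    using mlin_eq_mone_imp_scalar assms(1,3,4) by blast
  then show ?thesis using pow_coeffs_near_2[OF near, of l] by simp
qed

definition prime_absv_bound :: "real \<Rightarrow> bool" where
  "prime_absv_bound \<delta> \<longleftrightarrow>
     0 < \<delta> \<and> \<delta> \<le> 1 \<and> (\<forall>l. prime l \<longrightarrow> of_nat l \<noteq> (0::'a) \<longrightarrow> \<delta> \<le> absv (of_nat l))"

text \<open>At most one prime \<open>l\<close> can have \<open>|l| < 1\<close>: two such would give \<open>|1| < 1\<close> by Bezout.\<close>

lemma exists_prime_absv_bound: "\<exists>\<delta>. prime_absv_bound \<delta>"
proof (cases "\<exists>l0. prime l0 \<and> of_nat l0 \<noteq> (0::'a) \<and> absv (of_nat l0) < 1")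
  case True
  then obtain l0 where l0: "prime l0" "of_nat l0 \<noteq> (0::'a)" "absv (of_nat l0) < 1" by blast
  have "absv (of_nat l0) \<le> absv (of_nat l)" if l: "prime l" "of_nat l \<noteq> (0::'a)" for l
  proof (cases "l = l0")
    case False
    have "coprime (int l) (int l0)" using primes_coprime[OF l(1) l0(1) False] by simp
    then obtain u v where uv: "u * int l + v * int l0 = 1"
      using bezout_int[of "int l" "int l0"] by (auto simp: coprime_iff_gcd_eq_1)
    have "(1::'a) = of_int u * of_nat l + of_int v * of_nat l0"
      using arg_cong[OF uv, of "of_int :: int \<Rightarrow> 'a"] by simp
    then have "1 \<le> max (absv (of_int u * of_nat l)) (absv (of_int v * of_nat l0))"
      using absv_ultra by (metis absv_1)
    moreover have "absv (of_int v * of_nat l0) < 1"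
      using absv_mult_le_left[OF absv_of_int_le_1[of v], of "of_nat l0"] l0(3) by linarith
    ultimately have "1 \<le> absv (of_int u * of_nat l)" by linarith
    also have "\<dots> \<le> absv (of_nat l)" using absv_mult_le_left[OF absv_of_int_le_1] .
    finally show ?thesis using l0(3) by simp
  qed simp
  moreover have "0 < absv (of_nat l0 :: 'a)" using l0(2) by (simp add: absv_pos_iff)
  ultimately show ?thesis using l0 unfolding prime_absv_bound_def
    by (intro exI[of _ "absv (of_nat l0 :: 'a)"]) auto
next
  case False
  then show ?thesis unfolding prime_absv_bound_def by (intro exI[of _ 1]) (auto simp: not_less)
qed

lemma prime_order_trace_far_from_2:
  assumes \<delta>: "prime_absv_bound \<delta>"
    and w: "mdet w = 1" "mpow_nat w l = mone" "w \<noteq> mone" "prime l" "of_nat l \<noteq> (0::'a)"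
  shows "\<delta>\<^sup>2 \<le> absv (mtr w - 2)"
proof -
  have \<delta>1: "\<delta>\<^sup>2 \<le> \<delta>" "\<delta> \<le> 1" "0 < \<delta>"
    using \<delta> by (auto simp: prime_absv_bound_def power2_eq_square mult_left_le_one_le)
  consider "w = (-1, 0, 0, -1)" | "absv (mtr w - 2) \<ge> 1" | "w \<noteq> (-1, 0, 0, -1)" "absv (mtr w - 2) < 1"
    by fastforce
  then show ?thesis
  proof cases
    case 1
    have "(2::'a) \<noteq> 0"
    proof
      assume "(2::'a) = 0"
      then have "(-1::'a) = 1" by (metis add_eq_0_iff_both_eq_0 eq_neg_iff_add_eq_0 one_add_one)
      then show False using w(3) 1 by (simp add: mone_def)
    qed
    then have "\<delta> \<le> absv 2" using \<delta> two_is_prime_nat unfolding prime_absv_bound_def by (metis of_nat_numeral)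
    then have "\<delta>\<^sup>2 \<le> absv 2 ^ 2" using \<delta>1 by (intro power_mono) auto
    moreover have "mtr w - 2 = - (2 ^ 2)" using 1 by simp
    then have "absv (mtr w - 2) = absv 2 ^ 2" by (simp only: absv_minus absv_power)
    ultimately show ?thesis by simp
  next
    case 2
    then show ?thesis using \<delta>1 by linarith
  next
    case 3
    have "\<delta> \<le> absv (of_nat l :: 'a)" using \<delta> w(4,5) unfolding prime_absv_bound_def by blast
    then show ?thesis using absv_order_le_trace_dist[OF w(1-3) 3] \<delta>1 by linarith
  qed
qed

text \<open>Induction on the order, passing to \<open>y\<^sup>r\<^sup>'\<close> of prime order \<open>l\<close>; the trace stays close to 2.\<close>

lemma torsion_near_2_eq_mone:
  assumes \<delta>: "prime_absv_bound \<delta>"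
  shows "r \<ge> 1 \<Longrightarrow> mdet y = 1 \<Longrightarrow> mpow_nat y r = mone \<Longrightarrow> absv (mtr y - 2) < \<delta>\<^sup>2 \<Longrightarrow>
    (\<forall>l. prime l \<longrightarrow> l dvd r \<longrightarrow> of_nat l \<noteq> (0::'a)) \<Longrightarrow> y = mone"
proof (induction r rule: less_induct)
  case (less r)
  show ?case
  proof (cases "r = 1")
    case False
    then obtain l where l: "prime l" "l dvd r" using prime_factor_nat by blast
    then obtain r' where r': "r = l * r'" by blast
    have "r' \<ge> 1" using less(2) r' by (cases r') auto
    then have "r' < r" using r' prime_gt_1_nat[OF l(1)] by simp
    define w where "w = mpow_nat y r'"
    show ?thesis
    proof (cases "w = mone")
      case True
      show ?thesis
        using less.IH[OF \<open>r' < r\<close> \<open>r' \<ge> 1\<close> less(3) True[unfolded w_def] less(5)] less(6) r' by auto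
    next
      case False
      have "\<delta>\<^sup>2 \<le> 1" using \<delta> by (simp add: prime_absv_bound_def power_le_one)
      then have "absv (mtr w - 2) < \<delta>\<^sup>2"
        using mtr_mpow_nat_near_2[OF less(3), of r'] less(5) by (simp add: w_def)
      moreover have "mpow_nat w l = mone"
        using less(4) r' by (simp add: w_def mpow_nat_mult mult.commute)
      moreover have "mdet w = 1" using mdet_mpow_nat less(3) by (simp add: w_def)
      ultimately show ?thesis
        using prime_order_trace_far_from_2[OF \<delta>, of w l] False l less(6) by fastforce
    qed
  qed (use less in simp)
qed

text \<open>In characteristic \<open>p\<close> the \<open>p\<close>-part of the order is removed first, using
  \<open>tr (u\<^sup>p) - 2 = (tr u - 2)\<^sup>p\<close>.\<close>

lemma torsion_near_2_trace_eq_2: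
  assumes \<delta>: "prime_absv_bound \<delta>"
    and v: "mdet v = 1" "mpow_nat v m = mone" "m \<ge> 1" "absv (mtr v - 2) < \<delta>\<^sup>2"
  shows "mtr v = 2"
proof (cases "CHAR('a) = 0")
  case True
  then have "\<forall>l. prime l \<longrightarrow> l dvd m \<longrightarrow> of_nat l \<noteq> (0::'a)"
    using CHAR_eq0_iff prime_gt_0_nat by blast
  then have "v = mone" using torsion_near_2_eq_mone[OF \<delta> v(3) v(1) v(2) v(4)] by blast
  then show ?thesis by (simp add: mone_def)
next
  case False
  define p where "p = CHAR('a)"
  have p: "CHAR('a) = p" "prime p" using False prime_CHAR_semidom by (auto simp: p_def)
  obtain r where r: "m = p ^ multiplicity p m * r" "\<not> p dvd r"
    using multiplicity_decompose'[of m p] v(3) p(2) by (metis not_one_le_zero not_prime_unit)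
  define y where "y = mpow_nat v (p ^ multiplicity p m)"
  have zy: "mtr y - 2 = (mtr v - 2) ^ (p ^ multiplicity p m)"
    using mtr_mpow_nat_CHAR_power[OF p v(1)] by (simp add: y_def)
  have "\<delta>\<^sup>2 \<le> 1" using \<delta> by (simp add: prime_absv_bound_def power_le_one)
  then have "absv (mtr v - 2) ^ (p ^ multiplicity p m) \<le> absv (mtr v - 2) ^ 1"
    using v(4) p(2) by (intro power_decreasing) (auto simp: prime_gt_0_nat Suc_le_eq)
  then have "absv (mtr y - 2) < \<delta>\<^sup>2" using v(4) zy by simp
  moreover have "\<forall>l. prime l \<longrightarrow> l dvd r \<longrightarrow> of_nat l \<noteq> (0::'a)"
    using r(2) p by (metis of_nat_eq_0_iff_char_dvd primes_dvd_imp_eq)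
  moreover have "r \<ge> 1" using r v(3) by (cases r) auto
  ultimately have "y = mone"
    using torsion_near_2_eq_mone[OF \<delta>] mdet_mpow_nat[OF v(1)] v(2) r(1)
    by (metis y_def mpow_nat_mult)
  then have "(mtr v - 2) ^ (p ^ multiplicity p m) = 0" using zy by (simp add: mone_def)
  then show ?thesis by simp
qed

section \<open>A uniform exponent bringing integral traces close to 2\<close>


definition pow_coeffs_close :: "real \<Rightarrow> 'a \<Rightarrow> nat \<Rightarrow> nat \<Rightarrow> bool" where
  "pow_coeffs_close e s i j \<longleftrightarrow>
     absv (fst (pow_coeffs s i) - fst (pow_coeffs s j)) < e \<and>
     absv (snd (pow_coeffs s i) - snd (pow_coeffs s j)) < e"

text \<open>The recursion for \<open>pow_coeffs\<close> can be run backwards with integral coefficients.\<close>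

lemma pow_coeffs_close_Suc:
  assumes "absv s \<le> 1" "pow_coeffs_close e s (Suc i) (Suc j)"
  shows "pow_coeffs_close e s i j"
proof -
  define a1 b1 a2 b2 where "a1 = fst (pow_coeffs s i)" "b1 = snd (pow_coeffs s i)"
    "a2 = fst (pow_coeffs s j)" "b2 = snd (pow_coeffs s j)"
  have h: "absv ((a1 * s + b1) - (a2 * s + b2)) < e" "absv (a1 - a2) < e"
    using assms(2) by (auto simp: pow_coeffs_close_def a1_b1_a2_b2_def absv_minus_commute)
  have "b1 - b2 = ((a1 * s + b1) - (a2 * s + b2)) - s * (a1 - a2)"
    by (simp add: algebra_simps)
  moreover have "absv (s * (a1 - a2)) < e"
    using h(2) absv_mult_le_left[OF assms(1)] order_le_less_trans by blast
  ultimately have "absv (b1 - b2) < e" using h(1) by (metis absv_diff_less)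
  then show ?thesis using h(2) by (simp add: pow_coeffs_close_def a1_b1_a2_b2_def)
qed

lemma pow_coeffs_close_shift:
  "absv s \<le> 1 \<Longrightarrow> i \<le> j \<Longrightarrow> pow_coeffs_close e s i j \<Longrightarrow> pow_coeffs_close e s 0 (j - i)"
proof (induction i arbitrary: j)
  case (Suc i)
  then obtain j' where "j = Suc j'" by (cases j) auto
  then show ?case using Suc pow_coeffs_close_Suc[of s e i j'] by simp
qed simp

lemma pow_trace_near_2_of_close:
  assumes "absv s \<le> 1" "pow_coeffs_close e s 0 k"
  shows "absv (pow_trace s k - 2) < e"
proof -
  have c: "absv (fst (pow_coeffs s k)) < e" "absv (snd (pow_coeffs s k) - 1) < e"
    using assms(2) by (auto simp: pow_coeffs_close_def absv_minus_commute)
  have "absv (s * fst (pow_coeffs s k)) < e"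
    using c(1) absv_mult_le_left[OF assms(1)] order_le_less_trans by blast
  moreover have "absv (2 * (snd (pow_coeffs s k) - 1)) < e"
    using c(2) absv_2_mult_le[of "snd (pow_coeffs s k) - 1"] by linarith
  moreover have "pow_trace s k - 2 = s * fst (pow_coeffs s k) + 2 * (snd (pow_coeffs s k) - 1)"
    by (simp add: pow_trace_def algebra_simps)
  ultimately show ?thesis by (metis absv_add_less)
qed

text \<open>Pigeonhole on a finite quantization of the pairs \<open>pow_coeffs s k\<close>: the bound on the
  exponent is the number of cells, independent of \<open>s\<close>.\<close>

lemma uniform_pow_trace_near_2:
  assumes "e > 0"
  shows "\<exists>M. \<forall>s. absv s \<le> 1 \<longrightarrow> (\<exists>k. 1 \<le> k \<and> k \<le> M \<and> absv (pow_trace s k - 2) < e)"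
proof -
  obtain q :: "'a \<Rightarrow> 'a" where q: "finite (q ` {y. absv y \<le> 1})"
    "\<forall>x y. absv x \<le> 1 \<longrightarrow> absv y \<le> 1 \<longrightarrow> q x = q y \<longrightarrow> absv (x - y) < e"
    using ball_quantization[OF assms, of 1] by blast
  define Q where "Q = q ` {y. absv y \<le> 1}"
  have fin: "finite (Q \<times> Q)" using q(1) by (simp add: Q_def)
  have "\<exists>k. 1 \<le> k \<and> k \<le> card (Q \<times> Q) \<and> absv (pow_trace s k - 2) < e"
    if s: "absv s \<le> 1" for s
  proof -
    define code where "code k = (q (fst (pow_coeffs s k)), q (snd (pow_coeffs s k)))" for k
    have "code k \<in> Q \<times> Q" for k
      using pow_coeffs_integral[OF s, of k] by (simp add: code_def Q_def)
    then obtain i j where ij: "i < j" "j \<le> card (Q \<times> Q)" "code i = code j"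
      using pigeonhole_le_card[OF fin, of code] by blast
    have "pow_coeffs_close e s i j"
      using q(2) pow_coeffs_integral[OF s, of i] pow_coeffs_integral[OF s, of j] ij(3)
      by (simp add: pow_coeffs_close_def code_def)
    then have "absv (pow_trace s (j - i) - 2) < e"
      using pow_coeffs_close_shift[OF s] ij(1) pow_trace_near_2_of_close[OF s] by simp
    then show ?thesis using ij by (intro exI[of _ "j - i"]) auto
  qed
  then show ?thesis by blast
qed

lemma bounded_discrete_cyclic_trace_root:
  "\<exists>M. \<forall>h. mdet h = 1 \<longrightarrow> absv (mtr h) \<le> 1 \<longrightarrow> discrete_set absv (cyclic_group h) \<longrightarrow>
      mtr h \<in> pow_trace_roots M"
proof -
  obtain \<delta> where \<delta>: "prime_absv_bound \<delta>" using exists_prime_absv_bound by blast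
  then have "\<delta>\<^sup>2 > 0" by (simp add: prime_absv_bound_def)
  then obtain M where M: "\<And>s. absv s \<le> 1 \<Longrightarrow> \<exists>k. 1 \<le> k \<and> k \<le> M \<and> absv (pow_trace s k - 2) < \<delta>\<^sup>2"
    using uniform_pow_trace_near_2 by blast
  have "mtr h \<in> pow_trace_roots M"
    if h: "mdet h = 1" "absv (mtr h) \<le> 1" "discrete_set absv (cyclic_group h)" for h
  proof -
    obtain m where m: "m \<ge> 1" "mpow_nat h m = mone"
      using discrete_cyclic_group_torsion[OF h] by blast
    obtain k where k: "1 \<le> k" "k \<le> M" "absv (pow_trace (mtr h) k - 2) < \<delta>\<^sup>2"
      using M[OF h(2)] by blast
    have "mpow_nat (mpow_nat h k) m = mone"
      using m(2) by (simp add: mpow_nat_mult mult.commute[of k m] mpow_nat_mult[symmetric])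
    then have "mtr (mpow_nat h k) = 2"
      using torsion_near_2_trace_eq_2[OF \<delta> mdet_mpow_nat[OF h(1)] _ m(1)] k(3)
      by (simp add: mtr_mpow_nat[OF h(1)])
    then show ?thesis using k by (auto simp: pow_trace_roots_def mtr_mpow_nat[OF h(1)])
  qed
  then show ?thesis by blast
qed

section \<open>Elliptic elements have integral trace\<close>


lemma lattice_scaled_image_trace:
  assumes "is_lattice absv L"
    and img: "\<And>w. w \<in> L \<Longrightarrow> \<exists>w'\<in>L. mapply h w = (c * fst w', c * snd w')"
  shows "\<exists>t. absv t \<le> 1 \<and> mtr h = c * t"
proof -
  obtain p q r s where det: "p * s - q * r \<noteq> 0"
    and L: "L = {(x * p + y * r, x * q + y * s) | x y. absv x \<le> 1 \<and> absv y \<le> 1}"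
    using assms(1) unfolding is_lattice_def by blast
  have "(x * p + y * r, x * q + y * s) \<in> L" if "absv x \<le> 1" "absv y \<le> 1" for x y
    unfolding L using that by blast
  from this[of 1 0] this[of 0 1] have basis: "(p, q) \<in> L" "(r, s) \<in> L" by simp_all
  have "\<exists>x y. absv x \<le> 1 \<and> absv y \<le> 1 \<and> mapply h w = (c * (x * p + y * r), c * (x * q + y * s))"
    if w: "w \<in> L" for w
  proof -
    obtain w' where w': "w' \<in> L" "mapply h w = (c * fst w', c * snd w')" using img w by blast
    then obtain x y where "absv x \<le> 1" "absv y \<le> 1" "w' = (x * p + y * r, x * q + y * s)"
      unfolding L by blast
    moreover from w'(2) this(3) have "mapply h w = (c * (x * p + y * r), c * (x * q + y * s))"
      by simp
    ultimately show ?thesis by blast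
  qed
  from this[OF basis(1)] this[OF basis(2)] obtain x1 y1 x2 y2
    where "absv x1 \<le> 1" "mapply h (p, q) = (c * (x1 * p + y1 * r), c * (x1 * q + y1 * s))"
      and "absv y2 \<le> 1" "mapply h (r, s) = (c * (x2 * p + y2 * r), c * (x2 * q + y2 * s))"
    by blast
  then show ?thesis
    using mtr_in_basis[OF det] by (intro exI[of _ "x1 + y2"]) (simp add: absv_add_le)
qed

text \<open>Both \<open>g\<close> and \<open>g\<^sup>-\<^sup>1\<close> scale the lattice, by \<open>c\<close> and \<open>c\<^sup>-\<^sup>1\<close>, so \<open>tr g\<^sup>2 = t t'\<close>
  with \<open>|t|, |t'| \<le> 1\<close>.\<close>

lemma elliptic_trace_integral:
  assumes det: "mdet g = 1" and ell: "elliptic absv g"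
  shows "absv (mtr g) \<le> 1"
proof -
  obtain L c where L: "is_lattice absv L" and "c \<noteq> 0"
    and img: "mapply g ` L = (\<lambda>(x, y). (c * x, c * y)) ` L"
    using ell unfolding elliptic_def by blast
  have "\<exists>w'\<in>L. mapply g w = (c * fst w', c * snd w')" if w: "w \<in> L" for w
  proof -
    have "mapply g w \<in> (\<lambda>(x, y). (c * x, c * y)) ` L" using img w by blast
    then obtain a b where "(a, b) \<in> L" "mapply g w = (c * a, c * b)" by auto
    then show ?thesis by force
  qed
  then obtain t where t: "absv t \<le> 1" "mtr g = c * t"
    using lattice_scaled_image_trace[OF L, of g c] by blast
  have "\<exists>w'\<in>L. mapply (minv g) w = (inverse c * fst w', inverse c * snd w')"
    if wL: "w \<in> L" for w
  proof -
    obtain w1 w2 where w: "w = (w1, w2)" by (cases w)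
    have "(c * w1, c * w2) \<in> mapply g ` L" using wL img w by force
    then obtain w' where w': "w' \<in> L" "mapply (minv g) (c * w1, c * w2) = w'"
      using mapply_minv[OF det] by force
    have "mapply (minv g) w = (inverse c * fst w', inverse c * snd w')"
      using mapply_scale[of "minv g" c w1 w2] w'(2) \<open>c \<noteq> 0\<close> w
      by (cases "mapply (minv g) w") (auto simp: field_simps)
    then show ?thesis using w'(1) by blast
  qed
  then obtain t' where t': "absv t' \<le> 1" "mtr (minv g) = inverse c * t'"
    using lattice_scaled_image_trace[OF L, of "minv g" "inverse c"] by blast
  have "mtr g * mtr g = t * t'"
    using t(2) t'(2) \<open>c \<noteq> 0\<close> by (simp add: mtr_minv field_simps)
  then have "absv (mtr g) * absv (mtr g) = absv t * absv t'"
    by (metis absv_mult)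
  then have "absv (mtr g) ^ 2 \<le> 1 ^ 2"
    using t(1) t'(1) by (simp add: power2_eq_square mult_le_one)
  then show ?thesis by (rule power2_le_imp_le) simp
qed

section \<open>Convergence of traces\<close>


lemma absv_mtr_diff_le_mdist: "absv (mtr x - mtr y) \<le> mdist absv x y"
proof -
  obtain a b c d where x: "x = (a, b, c, d)" by (cases x)
  obtain a' b' c' d' where y: "y = (a', b', c', d')" by (cases y)
  have "mtr x - mtr y = (a - a') + (d - d')" by (simp add: x y)
  then have "absv (mtr x - mtr y) \<le> max (absv (a - a')) (absv (d - d'))"
    using absv_ultra by simp
  then show ?thesis by (auto simp: x y)
qed

lemma mat_converges_mtr:
  assumes "mat_converges absv gs g" "e > 0"
  shows "\<exists>N. \<forall>n\<ge>N. absv (mtr (gs n) - mtr g) < e"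
proof -
  obtain N where N: "\<And>n. n \<ge> N \<Longrightarrow> mdist absv (gs n) g < e"
    using assms unfolding mat_converges_def by blast
  have "absv (mtr (gs n) - mtr g) < e" if "n \<ge> N" for n
    using N[OF that] absv_mtr_diff_le_mdist[of "gs n" g] by linarith
  then show ?thesis by blast
qed

lemma eventually_const_of_converges_in_finite:
  fixes x :: "nat \<Rightarrow> 'a"
  assumes "finite T" "\<And>n. n \<ge> N0 \<Longrightarrow> x n \<in> T"
    and conv: "\<And>e. e > 0 \<Longrightarrow> \<exists>N. \<forall>n\<ge>N. absv (x n - t) < e"
  shows "\<exists>N. \<forall>n\<ge>N. x n = x N"
proof -
  define D where "D = {absv (a - b) | a b. a \<in> T \<and> b \<in> T \<and> a \<noteq> b}"
  have "D \<subseteq> (\<lambda>(a, b). absv (a - b)) ` (T \<times> T)" unfolding D_def by auto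
  then have "finite D" using assms(1) finite_subset by blast
  define d where "d = Min (insert 1 D)"
  have "d > 0"
    using \<open>finite D\<close> unfolding d_def D_def by (subst Min_gr_iff) (auto simp: absv_pos_iff)
  have d_le: "d \<le> absv (a - b)" if "a \<in> T" "b \<in> T" "a \<noteq> b" for a b
    unfolding d_def using \<open>finite D\<close> that by (intro Min_le) (auto simp: D_def)
  obtain N1 where N1: "\<And>n. n \<ge> N1 \<Longrightarrow> absv (x n - t) < d" using conv[OF \<open>d > 0\<close>] by blast
  define N where "N = max N0 N1"
  have "x n = x N" if "n \<ge> N" for n
  proof (rule ccontr)
    assume ne: "x n \<noteq> x N"
    have "absv (x n - x N) \<le> max (absv (x n - t)) (absv (t - x N))"
      by (rule absv_triangle)
    also have "\<dots> < d"
      using N1[of n] N1[of N] that absv_minus_commute[of t "x N"] by (auto simp: N_def)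
    finally show False using d_le[OF assms(2) assms(2) ne] that by (auto simp: N_def)
  qed
  then show ?thesis by blast
qed

end

theorem corollary4p2:
  fixes absv :: "'a::field \<Rightarrow> real" and gs :: "nat \<Rightarrow> 'a mat2" and g :: "'a mat2"
  assumes "nonarch_local_field absv"
    and "\<And>n. gs n \<in> SL2"
    and "\<And>n. discrete_set absv (cyclic_group (gs n))"
    and "g \<in> SL2"
    and "elliptic absv g"
    and "mat_converges absv gs g"
  shows "\<exists>N. \<forall>n\<ge>N. mtr (gs n) = mtr (gs N)"
proof -
  interpret local_field_absv absv by (rule local_field_absv.intro) (rule assms(1))
  have det: "mdet g = 1" "\<And>n. mdet (gs n) = 1" using assms(2,4) by (auto simp: SL2_def)
  have conv: "\<exists>N. \<forall>n\<ge>N. absv (mtr (gs n) - mtr g) < e" if "e > 0" for e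
    using mat_converges_mtr[OF assms(6) that] .
  obtain N0 where N0: "\<And>n. n \<ge> N0 \<Longrightarrow> absv (mtr (gs n) - mtr g) < 1"
    using conv[of 1] by auto
  have integral: "absv (mtr (gs n)) \<le> 1" if "n \<ge> N0" for n
    using absv_add_le[of "mtr (gs n) - mtr g" 1 "mtr g"] N0[OF that]
      elliptic_trace_integral[OF det(1) assms(5)] by simp
  obtain M where M: "\<forall>h. mdet h = 1 \<longrightarrow> absv (mtr h) \<le> 1 \<longrightarrow>
      discrete_set absv (cyclic_group h) \<longrightarrow> mtr h \<in> pow_trace_roots M"
    using bounded_discrete_cyclic_trace_root by blast
  have "mtr (gs n) \<in> pow_trace_roots M" if "n \<ge> N0" for n
    using M det(2) integral[OF that] assms(3) by blast
  then show ?thesis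
    by (rule eventually_const_of_converges_in_finite[OF finite_pow_trace_roots _ conv])
qed

end
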